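(* Let $d\ge 3$ be odd, $n=\frac{d^2+1}{2}$, and consider the $[[d^2+1,2,d]]$ generalized bicycle code defined by $a(x)=1+x$, $b(x)=1+x^d$ in $R_n$. Let $O$ be the permutation of the $2n$ data qubits given on $\mathbb{F}_2^{2n}$ by $O\big((p(x),q(x))\big)=(x\,q(x^d),\,p(x^d))$ (the composition $\Pi_{1,0}E_dS$ of the swap $S:(p,q)\mapsto(q,p)$, the map $E_d:(p,q)\mapsto(p(x^d),q(x^d))$, and $\Pi_{1,0}:(p,q)\mapsto(xp,q)$), acting on Pauli operators by permuting tensor factors. Then applying $O$ implements a logical CNOT gate between the two logical qubits (with respect to a suitable choice of logical basis).
   Context: $R_n=\mathbb{F}_2[x]/\langle x^n-1\rangle$; the $2n$ qubits are labelled by the coefficients of pairs $(p(x),q(x))$ of elements of $R_n$. The generalized bicycle code defined by $a,b$ is the CSS code whose X-stabilizer group is generated by X-type Paulis on the vectors $x^i(a(x),b(x))$ and whose Z-stabilizer group is generated by Z-type Paulis on $x^i(b(x^{-1}),a(x^{-1}))$, $0\le i\le n-1$, $x^{-1}=x^{n-1}$. *)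

theory Defs
  imports "HOL-Library.Z2" "HOL-Computational_Algebra.Polynomial"
begin

text \<open>Elements of R_n = F_2[x]/(x^n - 1) are represented by their canonical
  representatives: polynomials over F_2 (type bit) reduced modulo x^n - 1.
  Qubit vectors in F_2^{2n} are pairs (p,q) of such representatives.\<close>

definition cyc :: "nat \<Rightarrow> bit poly" where
  "cyc n = monom 1 n - 1"

definition red :: "nat \<Rightarrow> bit poly \<Rightarrow> bit poly" where
  "red n p = p mod cyc n"

definition Rn :: "nat \<Rightarrow> bit poly set" where
  "Rn n = {p. red n p = p}"

definition Rvec :: "nat \<Rightarrow> (bit poly \<times> bit poly) set" where
  "Rvec n = Rn n \<times> Rn n"

definition vadd :: "bit poly \<times> bit poly \<Rightarrow> bit poly \<times> bit poly \<Rightarrow> bit poly \<times> bit poly" where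
  "vadd u v = (fst u + fst v, snd u + snd v)"

definition vsum :: "('i \<Rightarrow> bit poly \<times> bit poly) \<Rightarrow> 'i set \<Rightarrow> bit poly \<times> bit poly" where
  "vsum f I = ((\<Sum>i\<in>I. fst (f i)), (\<Sum>i\<in>I. snd (f i)))"

definition xshift :: "nat \<Rightarrow> nat \<Rightarrow> bit poly \<Rightarrow> bit poly" where
  "xshift n i p = red n (monom 1 i * p)"

definition subst_pow :: "nat \<Rightarrow> nat \<Rightarrow> bit poly \<Rightarrow> bit poly" where
  "subst_pow n k p = red n (pcompose p (monom 1 k))"

text \<open>p(x) \<mapsto> p(x^{-1}) in R_n, where x^{-1} = x^{n-1}\<close>
definition inv_sub :: "nat \<Rightarrow> bit poly \<Rightarrow> bit poly" where
  "inv_sub n p = subst_pow n (n - 1) p"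

definition dot :: "nat \<Rightarrow> bit poly \<times> bit poly \<Rightarrow> bit poly \<times> bit poly \<Rightarrow> bit" where
  "dot n u v = (\<Sum>k<n. coeff (fst u) k * coeff (fst v) k + coeff (snd u) k * coeff (snd v) k)"

definition cyc_span :: "nat \<Rightarrow> bit poly \<Rightarrow> bit poly \<Rightarrow> (bit poly \<times> bit poly) set" where
  "cyc_span n f g = {vsum (\<lambda>i. (xshift n i f, xshift n i g)) I | I. I \<subseteq> {..<n}}"

definition GB_X :: "nat \<Rightarrow> bit poly \<Rightarrow> bit poly \<Rightarrow> (bit poly \<times> bit poly) set" where
  "GB_X n a b = cyc_span n a b"

definition GB_Z :: "nat \<Rightarrow> bit poly \<Rightarrow> bit poly \<Rightarrow> (bit poly \<times> bit poly) set" where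
  "GB_Z n a b = cyc_span n (inv_sub n b) (inv_sub n a)"

definition orth :: "nat \<Rightarrow> (bit poly \<times> bit poly) set \<Rightarrow> (bit poly \<times> bit poly) set" where
  "orth n S = {v \<in> Rvec n. \<forall>s\<in>S. dot n v s = 0}"

definition bsc :: "bool \<Rightarrow> bit poly \<times> bit poly \<Rightarrow> bit poly \<times> bit poly" where
  "bsc c v = (if c then v else (0, 0))"

definition O_map :: "nat \<Rightarrow> nat \<Rightarrow> bit poly \<times> bit poly \<Rightarrow> bit poly \<times> bit poly" where
  "O_map n d v = (xshift n 1 (subst_pow n d (snd v)), subst_pow n d (fst v))"

text \<open>A qubit permutation O (acting on X-type Paulis X^v by v \<mapsto> O v and on
  Z-type Paulis Z^w by w \<mapsto> O w) implements a logical CNOT on the two logical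
  qubits of the CSS code with X-stabilizer space SX and Z-stabilizer space SZ:
  O preserves the stabilizer group, and there are logical operators
  X1,X2 (X-type, commuting with SZ) and Z1,Z2 (Z-type, commuting with SX)
  forming a logical basis (canonical pairing, spanning all logicals modulo
  stabilizers) such that, modulo stabilizers,
  X1 \<mapsto> X1 X2, X2 \<mapsto> X2, Z1 \<mapsto> Z1, Z2 \<mapsto> Z1 Z2.\<close>
definition implements_logical_CNOT ::
  "nat \<Rightarrow> (bit poly \<times> bit poly) set \<Rightarrow> (bit poly \<times> bit poly) set
     \<Rightarrow> (bit poly \<times> bit poly \<Rightarrow> bit poly \<times> bit poly) \<Rightarrow> bool" where
  "implements_logical_CNOT n SX SZ Pm \<longleftrightarrow>
     Pm ` SX = SX \<and> Pm ` SZ = SZ \<and>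
     (\<exists>x1 x2 z1 z2.
        x1 \<in> orth n SZ \<and> x2 \<in> orth n SZ \<and> z1 \<in> orth n SX \<and> z2 \<in> orth n SX \<and>
        dot n x1 z1 = 1 \<and> dot n x1 z2 = 0 \<and> dot n x2 z1 = 0 \<and> dot n x2 z2 = 1 \<and>
        (\<forall>v\<in>orth n SZ. \<exists>c1 c2. vadd v (vadd (bsc c1 x1) (bsc c2 x2)) \<in> SX) \<and>
        (\<forall>w\<in>orth n SX. \<exists>c1 c2. vadd w (vadd (bsc c1 z1) (bsc c2 z2)) \<in> SZ) \<and>
        vadd (Pm x1) (vadd x1 x2) \<in> SX \<and>
        vadd (Pm x2) x2 \<in> SX \<and>
        vadd (Pm z1) z1 \<in> SZ \<and>
        vadd (Pm z2) (vadd z1 z2) \<in> SZ)"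

end

theory Submission
  imports Defs "HOL-Number_Theory.Cong"
begin

(* Since d^2 + 1 = 2n, we have x^(d^2) = x^(-1).  The
   X-stabilisers are the multiples f (a, b) and the Z-stabilisers the multiples
   f (b(x^-1), a(x^-1)).  O sends f (a, b) to f(x^d) (a, b) and f (b(x^-1), a(x^-1)) to
   x f(x^d) (b(x^-1), a(x^-1)); as x and p(x) |-> p(x^d) are invertible on R_n, O preserves
   both stabiliser groups.  A pair (P, Q) orthogonal to the Z-stabilisers satisfies
   P b + Q a = 0 in R_n.  If P and Q have even weight, the factorisation x^n - 1 = (1 + x) J,
   with J = 1 + x + ... + x^(n-1) and J(1) = 1 because n is odd, shows that (P, Q) is a
   multiple of (a, b); symmetrically on the Z side.  Hence (J, 0), (J, J) and (J, J), (0, J)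
   are dual bases of the logical X and Z operators, and O swaps (J, 0) with (0, J) and fixes
   (J, J): a logical CNOT. *)

declare add_bit_eq_xor [simp del] mult_bit_eq_and [simp del]

section \<open>Arithmetic modulo x^n - 1 over F_2\<close>

lemma bit_poly_uminus [simp]: "- (p::bit poly) = p"
  by (simp add: poly_eq_iff)

lemma bit_poly_diff: "(p::bit poly) - q = p + q"
  by (metis bit_poly_uminus diff_conv_add_uminus)

lemma bit_poly_add_self [simp]: "(p::bit poly) + p = 0"
  by (metis bit_poly_diff diff_self)

lemma bit_poly_two [simp]: "(2::bit poly) = 0"
  by (metis one_add_one bit_poly_add_self)

lemma of_nat_bit_odd: "odd n \<Longrightarrow> (of_nat n :: bit) = 1"
  by (auto elim!: oddE)

lemma cyc_eq: "cyc n = monom 1 n + 1"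
  by (simp add: cyc_def bit_poly_diff)

lemma degree_cyc: "n > 0 \<Longrightarrow> degree (cyc n) = n"
  by (simp add: cyc_eq degree_add_eq_left degree_monom_eq)

lemma cyc_nonzero: "n > 0 \<Longrightarrow> cyc n \<noteq> 0"
  using degree_cyc[of n] by auto

lemma red_eq_iff_cong: "red n p = red n q \<longleftrightarrow> [p = q] (mod cyc n)"
  by (simp add: red_def cong_def)

lemma cong_red: "[red n p = p] (mod cyc n)"
  by (simp add: red_def)

lemma red_cong_eq: "[p = q] (mod cyc n) \<Longrightarrow> red n p = red n q"
  by (simp add: red_eq_iff_cong)

lemma red_in_Rn [simp]: "red n p \<in> Rn n"
  by (simp add: Rn_def red_def)

lemma red_add: "red n (p + q) = red n p + red n q"
  by (simp add: red_def poly_mod_add_left)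

lemma red_0 [simp]: "red n 0 = 0"
  by (simp add: red_def)

lemma zero_in_Rn [simp]: "0 \<in> Rn n"
  by (simp add: Rn_def)

lemma red_cyc [simp]: "red n (cyc n) = 0"
  by (simp add: red_def)

lemma red_sum: "red n (sum f A) = (\<Sum>i\<in>A. red n (f i))"
  by (induction A rule: infinite_finite_induct) (simp_all add: red_add)

lemma Rn_iff_degree:
  assumes "n > 0"
  shows "p \<in> Rn n \<longleftrightarrow> p = 0 \<or> degree p < n"
proof
  assume "p \<in> Rn n"
  then have "p mod cyc n = p"
    by (simp add: Rn_def red_def)
  then show "p = 0 \<or> degree p < n"
    using degree_mod_less[OF cyc_nonzero[OF assms], of p] by (simp add: degree_cyc[OF assms])
next
  assume "p = 0 \<or> degree p < n"
  then show "p \<in> Rn n"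
    using mod_poly_less[of p "cyc n"] by (auto simp: Rn_def red_def degree_cyc[OF assms])
qed

lemma Rn_coeff_eq_0:
  assumes "n > 0" "p \<in> Rn n" "n \<le> k"
  shows "coeff p k = 0"
proof -
  have "p = 0 \<or> degree p < n"
    using assms Rn_iff_degree by blast
  with assms(3) show ?thesis
    by (auto intro: coeff_eq_0)
qed

lemma Rn_eqI:
  assumes "n > 0" "p \<in> Rn n" "q \<in> Rn n" "\<And>k. k < n \<Longrightarrow> coeff p k = coeff q k"
  shows "p = q"
proof (rule poly_eqI)
  show "coeff p k = coeff q k" for k
    using assms Rn_coeff_eq_0[of n p k] Rn_coeff_eq_0[of n q k] by (cases "k < n") auto
qed

lemma Rn_as_sum_monoms:
  assumes "n > 0" "p \<in> Rn n"
  shows "p = (\<Sum>i<n. monom (coeff p i) i)"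
proof -
  have "degree p \<le> n - 1"
    using assms Rn_iff_degree[of n p] by auto
  then have "p = (\<Sum>i\<le>n - 1. monom (coeff p i) i)"
    by (simp add: poly_as_sum_of_monoms')
  also have "{..n - 1} = {..<n}"
    using assms(1) by auto
  finally show ?thesis .
qed

lemma monom_n_cong_1: "[monom 1 n = 1] (mod cyc n)"
  by (simp add: cong_iff_dvd_diff cyc_def)

lemma monom_cong: 
  assumes "[k = l] (mod n)"
  shows "[monom 1 k = monom 1 l] (mod cyc n)"
proof -
  have period: "[monom 1 (n * q + r) = monom 1 r] (mod cyc n)" for q r
    using cong_mult[OF cong_pow[OF monom_n_cong_1[of n], of q] cong_refl[of "monom 1 r"]]
    by (simp add: monom_power mult_monom)
  have reduce: "[monom 1 m = monom 1 (m mod n)] (mod cyc n)" for m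
    using period[of "m div n" "m mod n"] by simp
  from reduce[of k] reduce[of l] assms show ?thesis
    by (simp add: cong_def)
qed

lemma red_smult: "red n (smult c p) = smult c (red n p)"
  by (simp add: red_def mod_smult_left)

lemma red_monom:
  assumes "n > 0"
  shows "red n (monom c k) = monom c (k mod n)"
proof -
  have "red n (monom 1 k) = red n (monom 1 (k mod n))"
    by (intro red_cong_eq monom_cong) simp
  also have "\<dots> = monom 1 (k mod n)"
    using assms Rn_iff_degree[of n "monom 1 (k mod n)"] by (simp add: Rn_def degree_monom_eq)
  finally have "red n (smult c (monom 1 k)) = smult c (monom 1 (k mod n))"
    by (simp only: red_smult)
  then show ?thesis
    by (simp only: smult_monom mult_1_right)
qed

lemma Rn_smult: "p \<in> Rn n \<Longrightarrow> smult c p \<in> Rn n"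
  by (simp add: Rn_def red_smult)

lemma Rn_add: "p \<in> Rn n \<Longrightarrow> q \<in> Rn n \<Longrightarrow> p + q \<in> Rn n"
  by (simp add: Rn_def red_add)

section \<open>Substitution of x^k\<close>

lemma pcompose_monom_monom:
  "pcompose (monom (1::'a::comm_ring_1) k) (monom 1 l) = monom 1 (k * l)"
proof (induction k)
  case (Suc k)
  then show ?case
    by (simp add: monom_Suc pcompose_pCons mult_monom)
qed (simp add: pcompose_1 flip: one_poly_def)

lemma pcompose_monom_1 [simp]: "pcompose p (monom (1::'a::comm_ring_1) 1) = p"
  by (simp add: monom_Suc flip: pCons_one)

lemma cong_pcompose:
  fixes p q m r :: "'a::field poly"
  assumes "[p = q] (mod m)"
  shows "[pcompose p r = pcompose q r] (mod pcompose m r)"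
proof -
  obtain h where "q = p + m * h"
    using assms by (auto simp: cong_iff_lin)
  then have "pcompose q r = pcompose p r + pcompose m r * pcompose h r"
    by (simp add: pcompose_add pcompose_mult)
  then show ?thesis
    by (auto simp: cong_iff_lin)
qed

lemma pcompose_cong_right:
  fixes p r s m :: "'a::field poly"
  assumes "[r = s] (mod m)"
  shows "[pcompose p r = pcompose p s] (mod m)"
proof (induction p rule: pCons_induct)
  case (pCons a p)
  then show ?case
    by (simp add: pcompose_pCons cong_add cong_mult assms)
qed simp

lemma pcompose_cong_cyc:
  assumes "[p = q] (mod cyc n)"
  shows "[pcompose p (monom 1 k) = pcompose q (monom 1 k)] (mod cyc n)"
proof (rule cong_dvd_modulus)
  show "[pcompose p (monom 1 k) = pcompose q (monom 1 k)] (mod pcompose (cyc n) (monom 1 k))"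
    using assms by (rule cong_pcompose)
  have "[monom 1 (n * k) = 1] (mod cyc n)"
    using monom_cong[of "n * k" 0 n] by (simp add: cong_def)
  then show "cyc n dvd pcompose (cyc n) (monom 1 k)"
    by (simp add: cyc_eq pcompose_add pcompose_1 pcompose_monom_monom cong_iff_dvd_diff bit_poly_diff)
qed

lemma pcompose_monom_cong:
  assumes "[k = l] (mod n)"
  shows "[pcompose p (monom 1 k) = pcompose p (monom 1 l)] (mod cyc n)"
  using assms by (intro pcompose_cong_right monom_cong)


section \<open>Cyclic spans\<close>

lemma Rn_eq_sum_support:
  assumes "n > 0" "p \<in> Rn n"
  shows "p = (\<Sum>i\<in>{i. i < n \<and> coeff p i = 1}. monom 1 i)"
proof -
  have "p = (\<Sum>i<n. monom (coeff p i) i)"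
    using assms by (rule Rn_as_sum_monoms)
  also have "\<dots> = (\<Sum>i<n. if coeff p i = 1 then monom 1 i else 0)"
    by (intro sum.cong refl) auto
  also have "\<dots> = (\<Sum>i\<in>{i. i < n \<and> coeff p i = 1}. monom 1 i)"
    by (simp add: sum.If_cases Collect_conj_eq lessThan_def Int_commute)
  finally show ?thesis .
qed

lemma vsum_xshift:
  "vsum (\<lambda>i. (xshift n i u, xshift n i v)) I
     = (red n ((\<Sum>i\<in>I. monom 1 i) * u), red n ((\<Sum>i\<in>I. monom 1 i) * v))"
  by (simp add: vsum_def xshift_def red_sum sum_distrib_right)

lemma mem_cyc_span_iff:
  assumes "n > 0"
  shows "w \<in> cyc_span n u v \<longleftrightarrow> (\<exists>f. w = (red n (f * u), red n (f * v)))"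
proof
  assume "w \<in> cyc_span n u v"
  then show "\<exists>f. w = (red n (f * u), red n (f * v))"
    by (auto simp: cyc_span_def vsum_xshift)
next
  assume "\<exists>f. w = (red n (f * u), red n (f * v))"
  then obtain f where w: "w = (red n (f * u), red n (f * v))" ..
  define I where "I = {i. i < n \<and> coeff (red n f) i = 1}"
  have "[f = (\<Sum>i\<in>I. monom 1 i)] (mod cyc n)"
    using Rn_eq_sum_support[OF assms red_in_Rn, of f] cong_red[of n f]
    by (metis I_def cong_sym)
  then have "w = vsum (\<lambda>i. (xshift n i u, xshift n i v)) I"
    by (simp add: w vsum_xshift red_eq_iff_cong cong_mult)
  moreover have "I \<subseteq> {..<n}"
    by (auto simp: I_def)
  ultimately show "w \<in> cyc_span n u v"
    by (auto simp: cyc_span_def)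
qed

lemma cyc_span_cong:
  assumes "n > 0" "[u = u'] (mod cyc n)" "[v = v'] (mod cyc n)"
  shows "cyc_span n u v = cyc_span n u' v'"
proof -
  have "red n (f * u) = red n (f * u')" "red n (f * v) = red n (f * v')" for f
    using assms(2,3) by (simp_all add: red_eq_iff_cong cong_mult)
  then show ?thesis
    by (simp add: mem_cyc_span_iff[OF assms(1)] set_eq_iff)
qed

lemma GB_Z_eq:
  assumes "n > 0"
  shows "GB_Z n a b = cyc_span n (pcompose b (monom 1 (n - 1))) (pcompose a (monom 1 (n - 1)))"
  unfolding GB_Z_def inv_sub_def subst_pow_def
  using assms by (intro cyc_span_cong cong_red)

lemma poly_red_1: "poly (red n p) 1 = poly p 1"
proof -
  have "poly (cyc n) 1 = 0"
    by (simp add: cyc_eq poly_monom)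
  moreover have "p = p div cyc n * cyc n + red n p"
    by (simp add: red_def)
  then have "poly p 1 = poly (p div cyc n) 1 * poly (cyc n) 1 + poly (red n p) 1"
    by (metis poly_add poly_mult)
  ultimately show ?thesis
    by simp
qed

lemma cyc_span_even_weight:
  assumes "n > 0" "(p, q) \<in> cyc_span n u v" "poly u 1 = 0" "poly v 1 = 0"
  shows "p \<in> Rn n" "q \<in> Rn n" "poly p 1 = 0" "poly q 1 = 0"
  using assms by (auto simp: mem_cyc_span_iff poly_red_1)

lemma zero_mem_cyc_span: "n > 0 \<Longrightarrow> (0, 0) \<in> cyc_span n u v"
  by (auto simp: mem_cyc_span_iff intro: exI[of _ 0])

lemma coeff_red_monom_mult:
  assumes "n > 0" "p \<in> Rn n" "j < n"
  shows "coeff (red n (monom 1 e * p)) ((j + e) mod n) = coeff p j"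
proof -
  have "red n (monom 1 e * p) = (\<Sum>l<n. monom (coeff p l) ((l + e) mod n))"
    by (subst Rn_as_sum_monoms[OF assms(1,2)])
      (simp add: sum_distrib_left mult_monom red_sum red_monom[OF assms(1)] add.commute)
  moreover have "(l + e) mod n = (j + e) mod n \<longleftrightarrow> l = j" if "l < n" for l
    using that assms(3) cong_add_rcancel_nat[of l e j n] by (simp add: cong_def)
  ultimately show ?thesis
    using assms(3) by (simp add: coeff_sum if_distrib cong: if_cong)
qed

section \<open>Orthogonality to a cyclic span\<close>

lemma sum_coeff_xshift_monom:
  assumes "n > 0" "P \<in> Rn n" "k < n"
  shows "(\<Sum>j<n. coeff P j * coeff (xshift n k (monom 1 i)) j)
           = coeff (red n (P * pcompose (monom 1 i) (monom 1 (n - 1)))) k"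
proof -
  have "xshift n k (monom 1 i) = monom 1 ((k + i) mod n)"
    by (simp add: xshift_def mult_monom red_monom[OF assms(1)])
  then have "(\<Sum>j<n. coeff P j * coeff (xshift n k (monom 1 i)) j) = coeff P ((k + i) mod n)"
    using assms(1) by (simp add: if_distrib[of "(*) _"] cong: if_cong)
  also have "\<dots> = coeff (red n (monom 1 (i * (n - 1)) * P)) (((k + i) mod n + i * (n - 1)) mod n)"
    using assms(1,2) by (simp add: coeff_red_monom_mult)
  also have "((k + i) mod n + i * (n - 1)) mod n = k"
  proof -
    have "((k + i) mod n + i * (n - 1)) mod n = (k + i + i * (n - 1)) mod n"
      by (rule mod_add_left_eq)
    also have "k + i + i * (n - 1) = k + i * n"
      using assms(1) by (cases n) simp_all
    finally show ?thesis
      using assms(3) by simp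
  qed
  finally show ?thesis
    by (simp add: pcompose_monom_monom mult.commute)
qed

(* Correlating P with the cyclic shifts of u is multiplication by u(x^-1) = u(x^(n-1)). *)
lemma sum_coeff_xshift:
  assumes "n > 0" "P \<in> Rn n" "k < n"
  shows "(\<Sum>j<n. coeff P j * coeff (xshift n k u) j)
           = coeff (red n (P * pcompose u (monom 1 (n - 1)))) k"
proof -
  define I where "I = {i. i < n \<and> coeff (red n u) i = 1}"
  have u: "[u = (\<Sum>i\<in>I. monom 1 i)] (mod cyc n)"
    using Rn_eq_sum_support[OF assms(1) red_in_Rn, of u] cong_red[of n u]
    by (metis I_def cong_sym)
  have "xshift n k u = xshift n k (\<Sum>i\<in>I. monom 1 i)"
    using u by (simp add: xshift_def red_eq_iff_cong cong_mult)
  then have shift: "xshift n k u = (\<Sum>i\<in>I. xshift n k (monom 1 i))"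
    by (simp add: xshift_def sum_distrib_left red_sum)
  have "red n (P * pcompose u (monom 1 (n - 1)))
      = red n (P * pcompose (\<Sum>i\<in>I. monom 1 i) (monom 1 (n - 1)))"
    using pcompose_cong_cyc[OF u] by (simp add: red_eq_iff_cong cong_mult)
  then have conv: "red n (P * pcompose u (monom 1 (n - 1)))
      = (\<Sum>i\<in>I. red n (P * pcompose (monom 1 i) (monom 1 (n - 1))))"
    by (simp add: pcompose_sum sum_distrib_left red_sum)
  have "(\<Sum>j<n. coeff P j * coeff (xshift n k u) j)
      = (\<Sum>j<n. \<Sum>i\<in>I. coeff P j * coeff (xshift n k (monom 1 i)) j)"
    by (simp add: shift coeff_sum sum_distrib_left)
  also have "\<dots> = (\<Sum>i\<in>I. \<Sum>j<n. coeff P j * coeff (xshift n k (monom 1 i)) j)"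
    by (rule sum.swap)
  also have "\<dots> = (\<Sum>i\<in>I. coeff (red n (P * pcompose (monom 1 i) (monom 1 (n - 1)))) k)"
    by (simp only: sum_coeff_xshift_monom[OF assms])
  also have "\<dots> = coeff (red n (P * pcompose u (monom 1 (n - 1)))) k"
    by (simp only: conv coeff_sum)
  finally show ?thesis .
qed

lemma orth_cyc_span_cong_0:
  assumes "n > 0" "(P, Q) \<in> orth n (cyc_span n u v)"
  shows "[P * pcompose u (monom 1 (n - 1)) + Q * pcompose v (monom 1 (n - 1)) = 0] (mod cyc n)"
proof -
  let ?r = "red n (P * pcompose u (monom 1 (n - 1)) + Q * pcompose v (monom 1 (n - 1)))"
  have P: "P \<in> Rn n" and Q: "Q \<in> Rn n"
    using assms(2) by (auto simp: orth_def Rvec_def)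
  have "coeff ?r k = 0" if "k < n" for k
  proof -
    have "(xshift n k u, xshift n k v) \<in> cyc_span n u v"
      unfolding cyc_span_def using that
      by (intro CollectI exI[of _ "{k}"]) (simp add: vsum_def)
    then have "dot n (P, Q) (xshift n k u, xshift n k v) = 0"
      using assms(2) by (auto simp: orth_def)
    then show ?thesis
      by (simp add: dot_def sum.distrib red_add
          sum_coeff_xshift[OF assms(1) P that] sum_coeff_xshift[OF assms(1) Q that])
  qed
  then have "?r = red n 0"
    using assms(1) by (intro Rn_eqI) auto
  then show ?thesis
    by (simp only: red_eq_iff_cong)
qed

section \<open>The all-ones polynomial and even-weight kernels\<close>

definition all_ones :: "nat \<Rightarrow> bit poly" where
  "all_ones n = (\<Sum>i<n. monom 1 i)"

lemma coeff_all_ones: "coeff (all_ones n) k = (if k < n then 1 else 0)"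
  by (simp add: all_ones_def coeff_sum)

lemma all_ones_in_Rn: "n > 0 \<Longrightarrow> all_ones n \<in> Rn n"
  by (simp add: Rn_def all_ones_def red_sum red_monom)

lemma cyc_eq_mult_all_ones: "cyc n = (1 + monom 1 1) * all_ones n"
proof (induction n)
  case (Suc n)
  have "(1 + monom 1 1) * all_ones (Suc n) = cyc n + (1 + monom 1 1) * monom 1 n"
    by (simp add: all_ones_def Suc.IH distrib_left)
  also have "\<dots> = cyc (Suc n)"
    by (simp add: cyc_eq distrib_right mult_monom add.commute add.left_commute)
  finally show ?case ..
qed (simp add: cyc_eq all_ones_def)

lemma poly_all_ones_1: "odd n \<Longrightarrow> poly (all_ones n) 1 = 1"
  by (simp add: all_ones_def poly_monom poly_sum of_nat_bit_odd)

lemma sum_coeff_eq_poly_1: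
  assumes "n > 0" "p \<in> Rn n"
  shows "(\<Sum>k<n. coeff p k) = poly p 1"
  by (subst (2) Rn_as_sum_monoms[OF assms]) (simp add: poly_sum poly_monom)

lemma xshift_all_ones: "n > 0 \<Longrightarrow> xshift n 1 (all_ones n) = all_ones n"
proof -
  assume "n > 0"
  have "monom 1 1 * all_ones n = cyc n + all_ones n"
    by (simp add: cyc_eq_mult_all_ones distrib_right)
  then show ?thesis
    using all_ones_in_Rn[OF \<open>n > 0\<close>] by (simp add: xshift_def red_add Rn_def)
qed

lemma subst_pow_all_ones:
  assumes "n > 0" "coprime d n"
  shows "subst_pow n d (all_ones n) = all_ones n"
proof -
  define h where "h i = (i * d) mod n" for i
  have "inj_on h {..<n}"
    using cong_mult_rcancel_nat[OF assms(2)] by (auto simp: inj_on_def h_def cong_def)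
  moreover have "h ` {..<n} \<subseteq> {..<n}"
    using assms(1) by (auto simp: h_def)
  ultimately have "h ` {..<n} = {..<n}"
    by (simp add: endo_inj_surj)
  have "subst_pow n d (all_ones n) = (\<Sum>i<n. monom 1 (h i))"
    using assms(1)
    by (simp add: subst_pow_def all_ones_def pcompose_sum pcompose_monom_monom red_sum red_monom h_def)
  also have "\<dots> = (\<Sum>j\<in>h ` {..<n}. monom 1 j)"
    by (simp add: sum.reindex[OF \<open>inj_on h {..<n}\<close>])
  finally show ?thesis
    by (simp add: \<open>h ` {..<n} = {..<n}\<close> all_ones_def)
qed

lemma factor_one_plus_X:
  fixes p :: "bit poly"
  assumes "poly p 1 = 0"
  obtains q where "p = (1 + monom 1 1) * q"
proof -
  have "[:1, 1:] dvd p"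
    using assms poly_eq_0_iff_dvd[of p 1] by simp
  moreover have "[:1, 1:] = (1 + monom (1::bit) 1)"
    by (simp add: monom_Suc one_pCons)
  ultimately show ?thesis
    using that by auto
qed

lemma cyc_dvd_cancel_one_plus_X:
  assumes "odd n" "cyc n dvd (1 + monom 1 1) * h" "poly h 1 = 0"
  shows "cyc n dvd h"
proof -
  obtain g where "(1 + monom 1 1) * h = (1 + monom 1 1) * all_ones n * g"
    using assms(2) unfolding cyc_eq_mult_all_ones by (rule dvdE)
  moreover have "1 + monom (1::bit) 1 \<noteq> 0"
  proof
    assume "1 + monom (1::bit) 1 = 0"
    then have "poly (1 + monom (1::bit) 1) 0 = 0"
      by (simp only: poly_0)
    then show False
      by (simp add: poly_monom)
  qed
  ultimately have h: "h = all_ones n * g"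
    by (simp add: mult.assoc)
  then have "poly g 1 = 0"
    using assms(1,3) by (simp add: poly_all_ones_1)
  then obtain g' where "g = (1 + monom 1 1) * g'"
    by (rule factor_one_plus_X)
  then show ?thesis
    by (simp add: h cyc_eq_mult_all_ones mult.assoc mult.left_commute)
qed

(* With P = (1 + x) P', cancelling 1 + x against x^n - 1 = (1 + x) J leaves J | P' v + Q w,
   and J(1) = 1 upgrades this to x^n - 1 | P' v + Q w, i.e. Q w = P' v; take f = P' w'. *)
lemma kernel_pair_is_multiple:
  assumes "odd n"
    and "[P * v + Q * u = 0] (mod cyc n)"
    and "[u = (1 + monom 1 1) * w] (mod cyc n)" and "[w * w' = 1] (mod cyc n)"
    and "poly v 1 = 0" and "poly P 1 = 0" and "poly Q 1 = 0"
  obtains f where "[P = f * u] (mod cyc n)" and "[Q = f * v] (mod cyc n)"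
proof -
  obtain P' where P': "P = (1 + monom 1 1) * P'"
    using assms(6) by (rule factor_one_plus_X)
  have eq: "P * v + Q * ((1 + monom 1 1) * w) = (1 + monom 1 1) * (P' * v + Q * w)"
    by (simp add: P' algebra_simps)
  have "[P * v + Q * u = P * v + Q * ((1 + monom 1 1) * w)] (mod cyc n)"
    using assms(3) by (intro cong_add cong_mult cong_refl)
  from cong_trans[OF cong_sym[OF this] assms(2)]
  have "[(1 + monom 1 1) * (P' * v + Q * w) = 0] (mod cyc n)"
    by (simp only: eq)
  then have "cyc n dvd (1 + monom 1 1) * (P' * v + Q * w)"
    by (simp add: cong_0_iff)
  then have "cyc n dvd P' * v + Q * w"
    by (rule cyc_dvd_cancel_one_plus_X[OF assms(1)]) (simp add: assms(5,7))
  then have Qw: "[Q * w = P' * v] (mod cyc n)"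
    by (simp add: cong_iff_dvd_diff bit_poly_diff add.commute)
  show thesis
  proof
    have "[P' * w' * u = P' * w' * ((1 + monom 1 1) * w)] (mod cyc n)"
      using assms(3) by (intro cong_mult cong_refl)
    also have "P' * w' * ((1 + monom 1 1) * w) = P * (w * w')"
      by (simp add: P' algebra_simps)
    also have "[P * (w * w') = P * 1] (mod cyc n)"
      using assms(4) by (intro cong_mult cong_refl)
    finally show "[P = P' * w' * u] (mod cyc n)"
      by (simp add: cong_sym_eq)
    have "[P' * w' * v = (Q * w) * w'] (mod cyc n)"
      using cong_scalar_right[OF Qw, of w'] by (simp add: cong_sym_eq ac_simps)
    also have "(Q * w) * w' = Q * (w * w')"
      by (simp add: mult.assoc)
    also have "[Q * (w * w') = Q * 1] (mod cyc n)"
      using assms(4) by (intro cong_mult cong_refl)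
    finally show "[Q = P' * w' * v] (mod cyc n)"
      by (simp add: cong_sym_eq)
  qed
qed

section \<open>The permutation O on cyclic spans\<close>

lemma subst_pow_red: "subst_pow n d (red n h) = red n (pcompose h (monom 1 d))"
  unfolding subst_pow_def by (intro red_cong_eq pcompose_cong_cyc cong_red)

lemma xshift_red: "xshift n k (red n h) = red n (monom 1 k * h)"
  unfolding xshift_def by (intro red_cong_eq cong_mult cong_refl cong_red)

lemma O_map_red_mult:
  "O_map n d (red n (f * u), red n (f * v))
     = (red n (pcompose f (monom 1 d) * (monom 1 1 * pcompose v (monom 1 d))),
        red n (pcompose f (monom 1 d) * pcompose u (monom 1 d)))"
proof -
  have "monom 1 1 * pcompose (f * v) (monom 1 d)
      = pcompose f (monom 1 d) * (monom 1 1 * pcompose v (monom 1 d))"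
    by (simp add: pcompose_mult mult.left_commute)
  then show ?thesis
    by (simp add: O_map_def subst_pow_red xshift_red pcompose_mult ac_simps)
qed

(* O (f u, f v) = f(x^d) (x v(x^d), u(x^d)) = f(x^d) g (u', v'); surjectivity inverts
   f |-> f(x^d) g using an inverse of d modulo n. *)
lemma O_map_image_cyc_span:
  assumes "n > 0" "coprime d n"
    and v: "[monom 1 1 * pcompose v (monom 1 d) = g * u'] (mod cyc n)"
    and u: "[pcompose u (monom 1 d) = g * v'] (mod cyc n)"
    and g: "[g * g' = 1] (mod cyc n)"
  shows "O_map n d ` cyc_span n u v = cyc_span n u' v'"
proof -
  have O: "O_map n d (red n (f * u), red n (f * v))
      = (red n (pcompose f (monom 1 d) * g * u'), red n (pcompose f (monom 1 d) * g * v'))" for f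
    unfolding O_map_red_mult using u v
    by (simp add: red_eq_iff_cong cong_mult mult.assoc)
  show ?thesis
  proof (intro equalityI subsetI)
    fix w assume "w \<in> O_map n d ` cyc_span n u v"
    then obtain f where "w = O_map n d (red n (f * u), red n (f * v))"
      by (auto simp: mem_cyc_span_iff[OF assms(1)])
    then have "w = (red n ((pcompose f (monom 1 d) * g) * u'), red n ((pcompose f (monom 1 d) * g) * v'))"
      by (simp add: O)
    then show "w \<in> cyc_span n u' v'"
      unfolding mem_cyc_span_iff[OF assms(1)] by blast
  next
    fix w assume "w \<in> cyc_span n u' v'"
    then obtain h where w: "w = (red n (h * u'), red n (h * v'))"
      by (auto simp: mem_cyc_span_iff[OF assms(1)])
    obtain e where "[d * e = 1] (mod n)"
      using cong_solve_coprime_nat[OF assms(2)] by auto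
    define f where "f = pcompose (h * g') (monom 1 e)"
    have "[e * d = 1] (mod n)"
      using \<open>[d * e = 1] (mod n)\<close> by (simp add: mult.commute)
    from pcompose_monom_cong[OF this, of "h * g'"]
    have "[pcompose f (monom 1 d) = h * g'] (mod cyc n)"
      unfolding f_def pcompose_assoc[symmetric] pcompose_monom_monom pcompose_monom_1 .
    then have "[pcompose f (monom 1 d) * g = h * g' * g] (mod cyc n)"
      by (rule cong_scalar_right)
    also have "h * g' * g = h * (g * g')"
      by (simp add: ac_simps)
    also have "[h * (g * g') = h * 1] (mod cyc n)"
      using g by (intro cong_mult cong_refl)
    finally have "[pcompose f (monom 1 d) * g = h] (mod cyc n)"
      by simp
    then have "O_map n d (red n (f * u), red n (f * v)) = w"
      by (simp add: O w red_eq_iff_cong cong_mult)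
    moreover have "(red n (f * u), red n (f * v)) \<in> cyc_span n u v"
      by (auto simp: mem_cyc_span_iff[OF assms(1)])
    ultimately show "w \<in> O_map n d ` cyc_span n u v"
      by blast
  qed
qed

lemma orth_vadd: "u \<in> orth n S \<Longrightarrow> v \<in> orth n S \<Longrightarrow> vadd u v \<in> orth n S"
  by (auto simp: orth_def Rvec_def vadd_def Rn_add dot_def algebra_simps sum.distrib)

lemma orth_bsc: "u \<in> orth n S \<Longrightarrow> bsc c u \<in> orth n S"
  by (auto simp: orth_def bsc_def Rvec_def dot_def)

lemma all_ones_pair_in_orth:
  assumes "n > 0" "poly u 1 = 0" "poly v 1 = 0"
  shows "(smult c (all_ones n), smult c' (all_ones n)) \<in> orth n (cyc_span n u v)"
proof -
  have "dot n (smult c (all_ones n), smult c' (all_ones n)) (p, q) = 0"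
    if "(p, q) \<in> cyc_span n u v" for p q
  proof -
    note pq = cyc_span_even_weight[OF assms(1) that assms(2,3)]
    have "dot n (smult c (all_ones n), smult c' (all_ones n)) (p, q)
        = c * (\<Sum>k<n. coeff p k) + c' * (\<Sum>k<n. coeff q k)"
      by (simp add: dot_def coeff_all_ones sum.distrib sum_distrib_left mult.assoc)
    then show ?thesis
      by (simp add: sum_coeff_eq_poly_1[OF assms(1)] pq)
  qed
  then show ?thesis
    using assms(1) by (auto simp: orth_def Rvec_def Rn_smult all_ones_in_Rn)
qed

section \<open>The code with a = 1 + x and b = 1 + x^d, d^2 + 1 = 2n\<close>

locale gb_cnot_code =
  fixes d n :: nat
  assumes d_sq: "d * d + 1 = 2 * n"
begin

lemma n_pos: "n > 0"
  using d_sq by (cases n) auto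

lemma odd_n: "odd n"
proof -
  have "odd d"
    using d_sq by (metis dvd_triv_left even_add even_mult_iff odd_one)
  then obtain k where "d = 2 * k + 1"
    by (rule oddE)
  then have "n = 2 * (k * k + k) + 1"
    using d_sq by (simp add: algebra_simps)
  then show ?thesis
    by simp
qed

lemma coprime_d_n: "coprime d n"
proof (rule coprimeI)
  fix c assume "c dvd d" "c dvd n"
  then have "c dvd d * d + 1" "c dvd d * d"
    unfolding d_sq by simp_all
  then have "c dvd 1"
    using dvd_add_right_iff by blast
  then show "is_unit c"
    by simp
qed

lemma int_pred_n: "int (n - 1) = int n - 1"
  using n_pos by simp

lemma cong_d_sq_plus_1: "[d * d + 1 = 0] (mod n)"
  unfolding cong_def d_sq by simp

lemma cong_d_pred_n_d: "[d * (n - 1) * d = 1] (mod n)"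
proof -
  have dd: "int d * int d = 2 * int n - 1"
    using arg_cong[OF d_sq, of int] by simp
  have "int (d * (n - 1) * d) = int d * int d * (int n - 1)"
    unfolding of_nat_mult int_pred_n by (simp only: ac_simps)
  also have "\<dots> = 1 + int n * (2 * int n - 3)"
    unfolding dd by (simp add: algebra_simps)
  finally have "[int (d * (n - 1) * d) = int 1] (mod int n)"
    by (simp add: cong_iff_dvd_diff)
  then show ?thesis
    by (simp only: cong_int_iff)
qed

lemma cong_pred_n_sq: "[(n - 1) * (n - 1) = 1] (mod n)"
proof -
  have "int ((n - 1) * (n - 1)) = 1 + int n * (int n - 2)"
    unfolding of_nat_mult int_pred_n by (simp add: algebra_simps)
  then have "[int ((n - 1) * (n - 1)) = int 1] (mod int n)"
    by (simp add: cong_iff_dvd_diff)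
  then show ?thesis
    by (simp only: cong_int_iff)
qed

lemma cong_d_pred_n_sq: "[d * (n - 1) * (n - 1) = d] (mod n)"
  using cong_scalar_left[OF cong_pred_n_sq, of d] by (simp add: mult.assoc)

abbreviation "SX \<equiv> GB_X n (1 + monom 1 1) (1 + monom 1 d)"
abbreviation "SZ \<equiv> GB_Z n (1 + monom 1 1) (1 + monom 1 d)"

lemma SX_eq: "SX = cyc_span n (1 + monom 1 1) (1 + monom 1 d)"
  by (simp add: GB_X_def)

lemma SZ_eq: "SZ = cyc_span n (1 + monom 1 (d * (n - 1))) (1 + monom 1 (n - 1))"
  by (simp add: GB_Z_eq[OF n_pos] pcompose_add pcompose_1 pcompose_monom_monom)

lemma cong_X_mult_X_pred_n: "[monom 1 1 * monom 1 (n - 1) = 1] (mod cyc n)"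
  using n_pos monom_n_cong_1[of n] by (simp add: mult_monom)

lemma O_map_SX: "O_map n d ` SX = SX"
  unfolding SX_eq
proof (rule O_map_image_cyc_span[OF n_pos coprime_d_n, where g = 1 and g' = 1])
  have "monom 1 1 * pcompose (1 + monom 1 d) (monom 1 d) = monom (1::bit) 1 + monom 1 (d * d + 1)"
    by (simp add: pcompose_add pcompose_1 pcompose_monom_monom distrib_left mult_monom)
  also have "[monom 1 1 + monom 1 (d * d + 1) = monom 1 1 + 1] (mod cyc n)"
    by (intro cong_add cong_refl) (use monom_cong[OF cong_d_sq_plus_1] in simp)
  finally show "[monom 1 1 * pcompose (1 + monom 1 d) (monom 1 d) = 1 * (1 + monom 1 1)] (mod cyc n)"
    by (simp add: add.commute)
qed (simp_all add: pcompose_add pcompose_1 pcompose_monom_monom)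

lemma O_map_SZ: "O_map n d ` SZ = SZ"
  unfolding SZ_eq
proof (rule O_map_image_cyc_span[OF n_pos coprime_d_n, where g = "monom 1 1"],
    rule_tac[3] cong_X_mult_X_pred_n)
  show "[monom 1 1 * pcompose (1 + monom 1 (n - 1)) (monom 1 d)
      = monom 1 1 * (1 + monom 1 (d * (n - 1)))] (mod cyc n)"
    by (simp add: pcompose_add pcompose_1 pcompose_monom_monom mult.commute)
  have "pcompose (1 + monom 1 (d * (n - 1))) (monom 1 d) = 1 + monom (1::bit) (d * (n - 1) * d)"
    by (simp add: pcompose_add pcompose_1 pcompose_monom_monom)
  also have "[1 + monom 1 (d * (n - 1) * d) = 1 + monom 1 1] (mod cyc n)"
    by (intro cong_add cong_refl monom_cong cong_d_pred_n_d)
  also have "[1 + monom 1 1 = monom 1 1 * monom 1 (n - 1) + monom 1 1] (mod cyc n)"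
    using cong_X_mult_X_pred_n by (intro cong_add cong_refl) (simp add: cong_sym_eq)
  also have "monom 1 1 * monom 1 (n - 1) + monom 1 1 = monom 1 1 * (1 + monom 1 (n - 1))"
    by (simp add: distrib_left add.commute)
  finally show "[pcompose (1 + monom 1 (d * (n - 1))) (monom 1 d)
      = monom 1 1 * (1 + monom 1 (n - 1))] (mod cyc n)" .
qed

lemma orth_SZ_even_weight_in_SX:
  assumes "(P, Q) \<in> orth n SZ" "poly P 1 = 0" "poly Q 1 = 0"
  shows "(P, Q) \<in> SX"
proof -
  have P: "P \<in> Rn n" and Q: "Q \<in> Rn n"
    using assms(1) by (auto simp: orth_def Rvec_def)
  have "[P * (1 + monom 1 (d * (n - 1) * (n - 1))) + Q * (1 + monom 1 ((n - 1) * (n - 1))) = 0]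
      (mod cyc n)"
    using orth_cyc_span_cong_0[OF n_pos assms(1)[unfolded SZ_eq]]
    by (simp add: pcompose_add pcompose_1 pcompose_monom_monom)
  moreover have "[P * (1 + monom 1 (d * (n - 1) * (n - 1))) + Q * (1 + monom 1 ((n - 1) * (n - 1)))
      = P * (1 + monom 1 d) + Q * (1 + monom 1 1)] (mod cyc n)"
    by (intro cong_add cong_mult cong_refl monom_cong cong_d_pred_n_sq cong_pred_n_sq)
  ultimately have "[P * (1 + monom 1 d) + Q * (1 + monom 1 1) = 0] (mod cyc n)"
    by (metis cong_sym cong_trans)
  then obtain f where "[P = f * (1 + monom 1 1)] (mod cyc n)" "[Q = f * (1 + monom 1 d)] (mod cyc n)"
    by (rule kernel_pair_is_multiple[OF odd_n _ _ _ _ assms(2,3), where w = 1 and w' = 1])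
      (simp_all add: poly_monom)
  then have "P = red n (f * (1 + monom 1 1))" "Q = red n (f * (1 + monom 1 d))"
    using P Q by (simp_all add: Rn_def red_eq_iff_cong[symmetric])
  then show ?thesis
    unfolding SX_eq mem_cyc_span_iff[OF n_pos] by blast
qed

lemma orth_SX_even_weight_in_SZ:
  assumes "(P, Q) \<in> orth n SX" "poly P 1 = 0" "poly Q 1 = 0"
  shows "(P, Q) \<in> SZ"
proof -
  have P: "P \<in> Rn n" and Q: "Q \<in> Rn n"
    using assms(1) by (auto simp: orth_def Rvec_def)
  have "[(1 + monom 1 1) * monom 1 (n - 1) = 1 + monom 1 (n - 1)] (mod cyc n)"
    using cong_add[OF cong_X_mult_X_pred_n cong_refl[of "monom 1 (n - 1)"]]
    by (simp only: distrib_right mult_1_left add.commute)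
  then have a_bar: "[1 + monom 1 (n - 1) = (1 + monom 1 1) * monom 1 (n - 1)] (mod cyc n)"
    by (rule cong_sym)
  have unit: "[monom 1 (n - 1) * monom 1 1 = 1] (mod cyc n)"
    using cong_X_mult_X_pred_n by (simp only: mult.commute)
  have "[Q * (1 + monom 1 (d * (n - 1))) + P * (1 + monom 1 (n - 1)) = 0] (mod cyc n)"
    using orth_cyc_span_cong_0[OF n_pos assms(1)[unfolded SX_eq]]
    by (simp add: pcompose_add pcompose_1 pcompose_monom_monom add.commute mult.commute)
  then obtain f where
    "[Q = f * (1 + monom 1 (n - 1))] (mod cyc n)" "[P = f * (1 + monom 1 (d * (n - 1)))] (mod cyc n)"
    by (rule kernel_pair_is_multiple[OF odd_n _ a_bar unit _ assms(3,2)]) (simp_all add: poly_monom)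
  then have "P = red n (f * (1 + monom 1 (d * (n - 1))))" "Q = red n (f * (1 + monom 1 (n - 1)))"
    using P Q by (simp_all add: Rn_def red_eq_iff_cong[symmetric])
  then show ?thesis
    unfolding SZ_eq mem_cyc_span_iff[OF n_pos] by blast
qed

lemma all_ones_in_orth_SX: "(smult c (all_ones n), smult c' (all_ones n)) \<in> orth n SX"
  unfolding SX_eq by (rule all_ones_pair_in_orth[OF n_pos]) (simp_all add: poly_monom)

lemma all_ones_in_orth_SZ: "(smult c (all_ones n), smult c' (all_ones n)) \<in> orth n SZ"
  unfolding SZ_eq by (rule all_ones_pair_in_orth[OF n_pos]) (simp_all add: poly_monom)

lemma X_logicals_complete:
  assumes "v \<in> orth n SZ"
  shows "\<exists>c1 c2. vadd v (vadd (bsc c1 (all_ones n, 0)) (bsc c2 (all_ones n, all_ones n))) \<in> SX"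
proof -
  obtain P Q where v: "v = (P, Q)"
    by (cases v)
  \<comment> \<open>make both halves of the corrected vector even\<close>
  define c1 where "c1 = (poly P 1 \<noteq> poly Q 1)"
  define c2 where "c2 = (poly Q 1 = 1)"
  let ?V = "vadd v (vadd (bsc c1 (all_ones n, 0)) (bsc c2 (all_ones n, all_ones n)))"
  have "?V \<in> orth n SZ"
    using assms all_ones_in_orth_SZ[of 1 0] all_ones_in_orth_SZ[of 1 1]
    by (intro orth_vadd orth_bsc) simp_all
  moreover have "poly (fst ?V) 1 = 0" "poly (snd ?V) 1 = 0"
    using poly_all_ones_1[OF odd_n]
    by (cases "poly P 1"; cases "poly Q 1"; simp add: v vadd_def bsc_def c1_def c2_def)+
  ultimately have "(fst ?V, snd ?V) \<in> SX"
    by (intro orth_SZ_even_weight_in_SX) simp_all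
  then show ?thesis
    by auto
qed

lemma Z_logicals_complete:
  assumes "w \<in> orth n SX"
  shows "\<exists>c1 c2. vadd w (vadd (bsc c1 (all_ones n, all_ones n)) (bsc c2 (0, all_ones n))) \<in> SZ"
proof -
  obtain P Q where w: "w = (P, Q)"
    by (cases w)
  define c1 where "c1 = (poly P 1 = 1)"
  define c2 where "c2 = (poly P 1 \<noteq> poly Q 1)"
  let ?W = "vadd w (vadd (bsc c1 (all_ones n, all_ones n)) (bsc c2 (0, all_ones n)))"
  have "?W \<in> orth n SX"
    using assms all_ones_in_orth_SX[of 1 1] all_ones_in_orth_SX[of 0 1]
    by (intro orth_vadd orth_bsc) simp_all
  moreover have "poly (fst ?W) 1 = 0" "poly (snd ?W) 1 = 0"
    using poly_all_ones_1[OF odd_n]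
    by (cases "poly P 1"; cases "poly Q 1"; simp add: w vadd_def bsc_def c1_def c2_def)+
  ultimately have "(fst ?W, snd ?W) \<in> SZ"
    by (intro orth_SX_even_weight_in_SZ) simp_all
  then show ?thesis
    by auto
qed

lemma O_map_all_ones:
  "O_map n d (all_ones n, 0) = (0, all_ones n)"
  "O_map n d (0, all_ones n) = (all_ones n, 0)"
  "O_map n d (all_ones n, all_ones n) = (all_ones n, all_ones n)"
  using subst_pow_all_ones[OF n_pos coprime_d_n] xshift_all_ones[OF n_pos]
  by (simp_all add: O_map_def subst_pow_def xshift_def)

lemma dot_all_ones:
  "dot n (all_ones n, 0) (all_ones n, all_ones n) = 1"
  "dot n (all_ones n, 0) (0, all_ones n) = 0"
  "dot n (all_ones n, all_ones n) (all_ones n, all_ones n) = 0"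
  "dot n (all_ones n, all_ones n) (0, all_ones n) = 1"
  using of_nat_bit_odd[OF odd_n] by (simp_all add: dot_def coeff_all_ones)

lemma O_map_implements_logical_CNOT: "implements_logical_CNOT n SX SZ (O_map n d)"
proof -
  let ?J = "all_ones n"
  have logicals_orth:
    "(?J, 0) \<in> orth n SZ" "(?J, ?J) \<in> orth n SZ" "(?J, ?J) \<in> orth n SX" "(0, ?J) \<in> orth n SX"
    using all_ones_in_orth_SZ[of 1 0] all_ones_in_orth_SZ[of 1 1]
      all_ones_in_orth_SX[of 1 1] all_ones_in_orth_SX[of 0 1]
    by simp_all
  have zero: "(0, 0) \<in> SX" "(0, 0) \<in> SZ"
    unfolding SX_eq SZ_eq by (simp_all add: zero_mem_cyc_span n_pos)
  show ?thesis
    unfolding implements_logical_CNOT_def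
    by (intro conjI O_map_SX O_map_SZ, rule exI[of _ "(?J, 0)"], rule exI[of _ "(?J, ?J)"],
        rule exI[of _ "(?J, ?J)"], rule exI[of _ "(0, ?J)"])
      (use logicals_orth zero X_logicals_complete Z_logicals_complete in
        \<open>auto simp: O_map_all_ones dot_all_ones vadd_def\<close>)
qed

end

theorem theorem6:
  fixes d n :: nat and a b :: "bit poly"
  assumes "odd d" and "d \<ge> 3"
    and "n = (d^2 + 1) div 2"
    and "a = 1 + monom 1 1"
    and "b = 1 + monom 1 d"
  shows "implements_logical_CNOT n (GB_X n a b) (GB_Z n a b) (O_map n d)"
proof -
  have "even (d^2 + 1)"
    using assms(1) by simp
  then have "d * d + 1 = 2 * n"
    using assms(3) by (simp add: power2_eq_square)
  then interpret gb_cnot_code d n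
    by unfold_locales
  show ?thesis
    unfolding assms(4,5) by (rule O_map_implements_logical_CNOT)
qed

end
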